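(* Fix $c\in\mathbb{C}$, let $f_c(z)=z^2+c$, and for $q\in(0,1]$ let $z_q(0)=0$ and $$z_q(n)=\frac{1}{\Gamma(q)}\sum_{i=1}^{n}\frac{\Gamma(n-i+q)}{\Gamma(n-i+1)}\,f_c\big(z_q(i-1)\big),\qquad n\ge1.$$ As $q\uparrow 1$ this fractional-order Mandelbrot map becomes $z(n)=\sum_{i=1}^{n}f_c(z(i-1))$, $z(0)=0$. The set of parameters $c\in\mathbb{C}$ for which this sequence $(z(n))_{n\ge0}$ is bounded differs from the classical Mandelbrot set $\{c\in\mathbb{C}:(f_c^{\,n}(0))_{n\ge1}\text{ bounded}\}$.
   Context: The recursion is the numerical solution of the Caputo-like fractional difference initial value problem $\Delta^q z(t)=f_c(z(t+q-1))$, $t\in\mathbb{N}_{1-q}$, $z(0)=0$, of order $q$; the set of $c$ for which it stays bounded is the fractional-order Mandelbrot set. $\Gamma$ is Euler's Gamma function. *)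

theory Defs
  imports "HOL-Analysis.Analysis"
begin

definition fc :: "complex \<Rightarrow> complex \<Rightarrow> complex" where
  "fc c z = z\<^sup>2 + c"

fun zfrac :: "real \<Rightarrow> complex \<Rightarrow> nat \<Rightarrow> complex" where
  "zfrac q c 0 = 0"
| "zfrac q c (Suc n) =
     of_real (1 / Gamma q) *
     (\<Sum>i\<in>{1..Suc n}. of_real (Gamma (real (Suc n - i) + q) / Gamma (real (Suc n - i) + 1))
                        * fc c (zfrac q c (i - 1)))"

fun zone :: "complex \<Rightarrow> nat \<Rightarrow> complex" where
  "zone c 0 = 0"
| "zone c (Suc n) = (\<Sum>i\<in>{1..Suc n}. fc c (zone c (i - 1)))"

definition mandelbrot :: "complex set" where
  "mandelbrot = {c. bounded ((\<lambda>n. ((fc c) ^^ n) 0) ` {1..})}"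

end

theory Submission
  imports Defs
begin

(* The kernel Gamma(k+q)/(Gamma q Gamma(k+1)) is continuous in q > 0 and equals 1 at q = 1,
   so every iterate of the fractional map is continuous in q with value z(n) at q = 1.
   The two sets are separated by c = 1/4: the classical orbit of 0 stays in the disc of
   radius 1/2, while z(n+1) = z(n) + f_c(z(n)) increases by at least c in each step. *)

lemma zfrac_1: "zfrac 1 c n = zone c n"
proof (induction c n rule: zone.induct)
  case (2 c n)
  have "Gamma (real k + 1) > 0" for k
    by (intro Gamma_real_pos) simp
  then have ratio: "Gamma (real k + 1) / Gamma (real k + 1) = 1" for k
    by (metis less_irrefl divide_self)
  show ?case
    unfolding zfrac.simps zone.simps ratio using 2 by simp
qed simp

lemma isCont_zfrac:
  assumes "q > 0"
  shows "isCont (\<lambda>q. zfrac q c n) q"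
proof (induction n rule: less_induct)
  case (less n)
  show ?case
  proof (cases n)
    case 0
    then show ?thesis by simp
  next
    case (Suc m)
    have "isCont (\<lambda>q. fc c (zfrac q c (i - 1))) q" if "i \<in> {1..Suc m}" for i
      using that Suc unfolding fc_def by (intro continuous_intros less) auto
    moreover have "Gamma x \<noteq> 0" if "x > 0" for x :: real
      using Gamma_real_pos[OF that] by simp
    ultimately have "isCont (\<lambda>q. of_real (1 / Gamma q) * (\<Sum>i\<in>{1..Suc m}.
        of_real (Gamma (real (Suc m - i) + q) / Gamma (real (Suc m - i) + 1))
        * fc c (zfrac q c (i - 1)))) q"
      using assms by (intro continuous_intros) (auto dest: nonpos_Ints_nonpos)
    then show ?thesis
      by (simp only: Suc zfrac.simps)
  qed
qed

lemma zfrac_tendsto_zone: "((\<lambda>q. zfrac q c n) \<longlongrightarrow> zone c n) (at_left 1)"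
  using isCont_zfrac[of 1 c n] zfrac_1[of c n] by (simp add: isCont_def filterlim_at_split)

lemma zone_Suc: "zone c (Suc n) = zone c n + fc c (zone c n)"
  by (cases n) auto

lemma zone_of_real_ge:
  assumes "c \<ge> 0"
  shows "\<exists>x. zone (of_real c) n = of_real x \<and> real n * c \<le> x"
proof (induction n)
  case (Suc n)
  then obtain x where x: "zone (of_real c) n = of_real x" "real n * c \<le> x"
    by blast
  have "zone (of_real c) (Suc n) = of_real (x + (x\<^sup>2 + c))"
    unfolding zone_Suc x(1) fc_def by simp
  moreover have "real (Suc n) * c \<le> x + (x\<^sup>2 + c)"
    using x(2) by (simp add: algebra_simps add_increasing2)
  ultimately show ?case by blast
qed simp

lemma unbounded_zone_of_real:
  assumes "c > 0"
  shows "\<not> bounded (range (zone (of_real c)))"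
proof
  assume "bounded (range (zone (of_real c)))"
  then obtain B where B: "\<And>n. norm (zone (of_real c) n) \<le> B"
    by (auto simp: bounded_iff)
  obtain n :: nat where n: "real n > B / c"
    using reals_Archimedean2 by blast
  obtain x where x: "zone (of_real c) n = of_real x" "real n * c \<le> x"
    using zone_of_real_ge assms by (meson less_imp_le)
  have "B < real n * c"
    using n assms by (simp add: field_simps)
  also have "\<dots> \<le> norm (zone (of_real c) n)"
    using x by simp
  finally show False
    using B[of n] by simp
qed

lemma mandelbrot_cball: "cball 0 (1/4) \<subseteq> mandelbrot"
proof
  fix c :: complex
  assume "c \<in> cball 0 (1/4)"
  then have c: "norm c \<le> 1/4" by simp
  have "norm ((fc c ^^ n) 0) \<le> 1/2" for n
  proof (induction n)
    case (Suc n)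
    let ?z = "(fc c ^^ n) 0"
    have "norm (fc c ?z) \<le> norm ?z ^ 2 + norm c"
      unfolding fc_def by (metis norm_triangle_ineq norm_power)
    also have "\<dots> \<le> (1/2)\<^sup>2 + 1/4"
      using Suc c by (intro add_mono power_mono) auto
    finally show ?case by (simp add: power2_eq_square)
  qed simp
  then show "c \<in> mandelbrot"
    unfolding mandelbrot_def bounded_iff by blast
qed

theorem proposition3:
  shows "(\<forall>c n. ((\<lambda>q. zfrac q c n) \<longlongrightarrow> zone c n) (at_left 1))
         \<and> {c. bounded (range (zone c))} \<noteq> mandelbrot"
proof
  show "\<forall>c n. ((\<lambda>q. zfrac q c n) \<longlongrightarrow> zone c n) (at_left 1)"
    using zfrac_tendsto_zone by blast
  have "1/4 \<in> mandelbrot"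
    using mandelbrot_cball by auto
  moreover have "1/4 \<notin> {c. bounded (range (zone c))}"
    using unbounded_zone_of_real[of "1/4"] by simp
  ultimately show "{c. bounded (range (zone c))} \<noteq> mandelbrot"
    by blast
qed

end
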